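(* Let $n\ge1$, $s\in(0,1)$, $\varepsilon>0$ and $u\in C^{s+\varepsilon}_{loc}(\mathbb{R}^n)\cap L^1_{s/2}(\mathbb{R}^n)$. Then there is a constant $C>0$ depending only on $n$ and $s$ such that for all $R\in(0,1)$, $$\mathfrak{J}^s_{ACF}(u,R)\le\frac{C}{R^{2s}}\int_{\mathbb{R}^n}\frac{|\nabla^s u(x)|^2}{|x|^{n-2s}}\,dx.$$
   Context: $B_r$ is the open ball of radius $r$ centered at $0$. $L^1_{s/2}(\mathbb{R}^n):=\{u\in L^1_{loc}:\int\frac{|u(x)|}{1+|x|^{n+s}}dx<\infty\}$. For $\gamma>0$ not an integer, $C^{\gamma}_{loc}$ denotes $C^{k,\gamma-k}_{loc}$ with $k=\lfloor\gamma\rfloor$. With $\mu_{n,s}:=2^s\pi^{-n/2}\frac{\Gamma((n+s+1)/2)}{\Gamma((1-s)/2)}$, $\partial^s_i u(x):=\mu_{n,s}\int_{\mathbb{R}^n}\frac{(y_i-x_i)(u(y)-u(x))}{|y-x|^{n+s+1}}dy$, $\nabla^s u:=(\partial^s_1u,\dots,\partial^s_nu)$, $|\nabla^s u|$ its Euclidean norm. With $a_{n,s}:=\Gamma(n/2)\pi^{-n/2-1}\sin(\pi s)$, $K^s_r(0,y):=a_{n,s}\left(\frac{r^2}{|y|^2-r^2}\right)^s\frac{1}{|y|^n}$ for $|y|>r$, and $\mathfrak{J}^s_{ACF}(u,R):=\frac{1}{R^{1+s}}\int_0^R r^s\int_{\mathbb{R}^n\setminus B_r}K^s_r(0,y)|\nabla^s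 u(y)|^2\,dy\,dr$. *)

theory Defs
  imports "HOL-Analysis.Analysis"
begin

fun holder_k :: "nat \<Rightarrow> real \<Rightarrow> (real^'n \<Rightarrow> real) \<Rightarrow> bool" where
  "holder_k 0 \<alpha> f =
     (\<forall>K. compact K \<longrightarrow> (\<exists>M. \<forall>x\<in>K. \<forall>y\<in>K. \<bar>f x - f y\<bar> \<le> M * dist x y powr \<alpha>))"
| "holder_k (Suc k) \<alpha> f =
     ((\<forall>x. f differentiable (at x)) \<and>
      (\<forall>i. holder_k k \<alpha> (\<lambda>x. frechet_derivative f (at x) (axis i 1))))"

(* C^gamma_loc := C^{k, gamma-k}_loc with k = ceiling gamma - 1
   (= floor gamma for non-integer gamma; C^{gamma-1,1} for integer gamma) *)
definition holder_loc :: "real \<Rightarrow> (real^'n \<Rightarrow> real) \<Rightarrow> bool" where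
  "holder_loc \<gamma> f = holder_k (nat (\<lceil>\<gamma>\<rceil> - 1)) (\<gamma> - real (nat (\<lceil>\<gamma>\<rceil> - 1))) f"

definition L1_half :: "real \<Rightarrow> (real^'n \<Rightarrow> real) \<Rightarrow> bool" where
  "L1_half s u = (u \<in> borel_measurable lborel \<and>
     (\<forall>K. compact K \<longrightarrow> set_integrable lborel K u) \<and>
     integrable lborel (\<lambda>x. \<bar>u x\<bar> / (1 + norm x powr (real CARD('n) + s))))"

definition mu_ns :: "nat \<Rightarrow> real \<Rightarrow> real" where
  "mu_ns n s = 2 powr s * pi powr (- real n / 2) *
     Gamma ((real n + s + 1) / 2) / Gamma ((1 - s) / 2)"

definition frac_partial :: "real \<Rightarrow> (real^'n \<Rightarrow> real) \<Rightarrow> 'n \<Rightarrow> real^'n \<Rightarrow> real" where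
  "frac_partial s u i x = mu_ns CARD('n) s *
     (\<integral>y. (y $ i - x $ i) * (u y - u x) / norm (y - x) powr (real CARD('n) + s + 1) \<partial>lborel)"

definition frac_grad_norm :: "real \<Rightarrow> (real^'n \<Rightarrow> real) \<Rightarrow> real^'n \<Rightarrow> real" where
  "frac_grad_norm s u x = norm (\<chi> i. frac_partial s u i x)"

definition a_ns :: "nat \<Rightarrow> real \<Rightarrow> real" where
  "a_ns n s = Gamma (real n / 2) * pi powr (- real n / 2 - 1) * sin (pi * s)"

(* K^s_r(0,y), for |y| > r *)
definition Ker :: "real \<Rightarrow> real \<Rightarrow> real^'n \<Rightarrow> real" where
  "Ker s r y = a_ns CARD('n) s * (r\<^sup>2 / ((norm y)\<^sup>2 - r\<^sup>2)) powr s / norm y ^ CARD('n)"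

definition J_ACF :: "real \<Rightarrow> (real^'n \<Rightarrow> real) \<Rightarrow> real \<Rightarrow> ennreal" where
  "J_ACF s u R = ennreal (1 / R powr (1 + s)) *
     (\<integral>\<^sup>+ r. indicator {0<..<R} r * ennreal (r powr s) *
        (\<integral>\<^sup>+ y. indicator {y. r < norm y} y *
            ennreal (Ker s r y * (frac_grad_norm s u y)\<^sup>2) \<partial>(lborel :: (real^'n) measure)) \<partial>lborel)"

end

theory Submission imports Defs begin

(* For |y| = q the kernel weight satisfies r^s (r^2/(q^2-r^2))^s <= q^{2s} (q-r)^{-s}, and for
   r < m = min R q we have (q-r)^{-s} <= (m-r)^{-s}, whose integral over (0,m) is
   m^{1-s}/(1-s) <= R^{1-s}/(1-s). Hence the inner r-integral of J_ACF at y is at most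
   a_{n,s} q^{2s-n} R^{1-s}/(1-s) |grad^s u(y)|^2, and Tonelli gives the claim with
   C = a_{n,s}/(1-s). *)

lemma nn_integral_reflected_powr:
  fixes s m :: real
  assumes s: "0 < s" "s < 1" and m: "0 \<le> m"
  shows "(\<integral>\<^sup>+ r. ennreal (indicator {0..m} r * (m - r) powr (-s)) \<partial>lborel) = ennreal (m powr (1 - s) / (1 - s))"
proof -
  have "((\<lambda>t. t powr (-s)) has_integral (m powr (1 - s) / (1 - s))) {0..m}"
    using has_integral_powr_from_0[of "-s" m] s m by (simp add: add.commute)
  moreover have "(\<lambda>t. indicator {0..m} t * t powr (-s)) = (\<lambda>t. if t \<in> {0..m} then t powr (-s) else 0)"
    by (auto simp: indicator_def fun_eq_iff)
  ultimately have "((\<lambda>t. indicator {0..m} t * t powr (-s)) has_integral (m powr (1 - s) / (1 - s))) UNIV"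
    by (simp only: has_integral_restrict_UNIV)
  then have from_0: "(\<integral>\<^sup>+ t. ennreal (indicator {0..m} t * t powr (-s)) \<partial>lborel) = ennreal (m powr (1 - s) / (1 - s))"
    by (intro nn_integral_has_integral_lborel) (auto simp: indicator_def)
  have "(\<integral>\<^sup>+ r. ennreal (indicator {0..m} r * (m - r) powr (-s)) \<partial>lborel)
     = ennreal \<bar>-1::real\<bar> * (\<integral>\<^sup>+ t. ennreal (indicator {0..m} (m + -1 * t) * (m - (m + -1 * t)) powr (-s)) \<partial>lborel)"
    by (rule nn_integral_real_affine) auto
  also have "\<dots> = (\<integral>\<^sup>+ t. ennreal (indicator {0..m} t * t powr (-s)) \<partial>lborel)"
  proof -
    have "indicator {0..m} (m + -1 * t) = (indicator {0..m} t :: real)" for t :: real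
      by (auto simp: indicator_def)
    then show ?thesis by simp
  qed
  finally show ?thesis using from_0 by simp
qed

lemma kernel_weight_le:
  fixes s r q :: real
  assumes s: "0 \<le> s" and r: "0 < r" "r < q"
  shows "r powr s * (r\<^sup>2 / (q\<^sup>2 - r\<^sup>2)) powr s \<le> q powr (2 * s) * (q - r) powr (-s)"
proof -
  have diff_sq: "q\<^sup>2 - r\<^sup>2 = (q - r) * (q + r)" by (simp add: power2_eq_square algebra_simps)
  have pos: "0 < q\<^sup>2 - r\<^sup>2" using r unfolding diff_sq by simp
  have "r powr s * (r\<^sup>2 / (q\<^sup>2 - r\<^sup>2)) powr s = (r * (r\<^sup>2 / (q\<^sup>2 - r\<^sup>2))) powr s"
    by (rule powr_mult[symmetric])
  also have "\<dots> \<le> (q\<^sup>2 / (q - r)) powr s"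
  proof (rule powr_mono2[OF s])
    have "r\<^sup>2 \<le> q\<^sup>2"
      using r by (intro power_mono) auto
    then have "r * r\<^sup>2 \<le> (q + r) * q\<^sup>2"
      using r by (intro mult_mono) auto
    then have "r * r\<^sup>2 / (q\<^sup>2 - r\<^sup>2) \<le> (q + r) * q\<^sup>2 / ((q - r) * (q + r))"
      using pos unfolding diff_sq by (intro divide_right_mono) auto
    then show "r * (r\<^sup>2 / (q\<^sup>2 - r\<^sup>2)) \<le> q\<^sup>2 / (q - r)"
      using r by simp
  qed (use r pos in auto)
  also have "\<dots> = q powr (2 * s) * (q - r) powr (-s)"
  proof -
    have "q\<^sup>2 powr s = q powr (2 * s)"
      using r powr_powr[of q 2 s] powr_realpow[of q 2] by simp
    moreover have "(q - r) powr (-s) = 1 / (q - r) powr s"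
      by (rule powr_minus_divide)
    ultimately show ?thesis
      using r by (simp add: powr_divide)
  qed
  finally show ?thesis .
qed

lemma nn_integral_kernel_weight_le:
  fixes s R q :: real
  assumes s: "0 < s" "s < 1" and R: "0 < R" and q: "0 < q"
  shows "(\<integral>\<^sup>+ r. ennreal (indicator {0<..<min R q} r * (r powr s * (r\<^sup>2 / (q\<^sup>2 - r\<^sup>2)) powr s)) \<partial>lborel)
    \<le> ennreal (q powr (2 * s) * (R powr (1 - s) / (1 - s)))"
proof -
  define m where "m = min R q"
  have m: "0 < m" "m \<le> R" "m \<le> q" using R q by (auto simp: m_def)
  have pointwise: "indicator {0<..<m} r * (r powr s * (r\<^sup>2 / (q\<^sup>2 - r\<^sup>2)) powr s)
      \<le> q powr (2 * s) * (indicator {0..m} r * (m - r) powr (-s))" for r :: real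
  proof (cases "0 < r \<and> r < m")
    case True
    have "r powr s * (r\<^sup>2 / (q\<^sup>2 - r\<^sup>2)) powr s \<le> q powr (2 * s) * (q - r) powr (-s)"
      using True m s by (intro kernel_weight_le) auto
    also have "\<dots> \<le> q powr (2 * s) * (m - r) powr (-s)"
      using True m s by (intro mult_left_mono powr_mono2') auto
    finally show ?thesis
      using True by (simp add: indicator_def)
  next
    case False
    then show ?thesis by (auto simp: indicator_def)
  qed
  have "(\<integral>\<^sup>+ r. ennreal (indicator {0<..<m} r * (r powr s * (r\<^sup>2 / (q\<^sup>2 - r\<^sup>2)) powr s)) \<partial>lborel)
      \<le> (\<integral>\<^sup>+ r. ennreal (q powr (2 * s)) * ennreal (indicator {0..m} r * (m - r) powr (-s)) \<partial>lborel)"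
  proof (rule nn_integral_mono)
    fix r :: real
    show "ennreal (indicator {0<..<m} r * (r powr s * (r\<^sup>2 / (q\<^sup>2 - r\<^sup>2)) powr s))
        \<le> ennreal (q powr (2 * s)) * ennreal (indicator {0..m} r * (m - r) powr (-s))"
      unfolding ennreal_mult'[symmetric, OF powr_ge_zero] by (rule ennreal_leI[OF pointwise])
  qed
  also have "\<dots> = ennreal (q powr (2 * s)) * ennreal (m powr (1 - s) / (1 - s))"
    using s m by (subst nn_integral_cmult) (simp_all add: nn_integral_reflected_powr)
  also have "\<dots> \<le> ennreal (q powr (2 * s) * (R powr (1 - s) / (1 - s)))"
  proof -
    have "m powr (1 - s) \<le> R powr (1 - s)"
      using s m by (intro powr_mono2) auto
    then have "m powr (1 - s) / (1 - s) \<le> R powr (1 - s) / (1 - s)"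
      using s by (intro divide_right_mono) auto
    then show ?thesis
      unfolding ennreal_mult'[symmetric, OF powr_ge_zero] by (intro ennreal_leI mult_left_mono) auto
  qed
  finally show ?thesis unfolding m_def .
qed

lemma a_ns_pos:
  assumes "0 < n" "0 < s" "s < 1"
  shows "0 < a_ns n s"
  unfolding a_ns_def using assms by (intro mult_pos_pos Gamma_real_pos sin_gt_zero) auto

lemma nn_integral_Ker_eq:
  fixes y :: "real^'n" and s R c :: real
  assumes s: "0 < s" "s < 1"
  shows "(\<integral>\<^sup>+ r. indicator {0<..<R} r * ennreal (r powr s) *
        (indicator {y. r < norm y} y * ennreal (Ker s r y * c\<^sup>2)) \<partial>lborel)
    = ennreal (a_ns CARD('n) s * c\<^sup>2 / norm y ^ CARD('n)) *
      (\<integral>\<^sup>+ r. ennreal (indicator {0<..<min R (norm y)} r *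
        (r powr s * (r\<^sup>2 / ((norm y)\<^sup>2 - r\<^sup>2)) powr s)) \<partial>lborel)"
proof -
  define B where "B = a_ns CARD('n) s * c\<^sup>2 / norm y ^ CARD('n)"
  have B: "0 \<le> B"
    using a_ns_pos[of "CARD('n)" s] s by (simp add: B_def)
  have "indicator {0<..<R} r * ennreal (r powr s) * (indicator {y. r < norm y} y * ennreal (Ker s r y * c\<^sup>2))
      = ennreal B * ennreal (indicator {0<..<min R (norm y)} r *
          (r powr s * (r\<^sup>2 / ((norm y)\<^sup>2 - r\<^sup>2)) powr s))" for r :: real
  proof (cases "0 < r \<and> r < min R (norm y)")
    case True
    have "r powr s * (Ker s r y * c\<^sup>2) = B * (r powr s * (r\<^sup>2 / ((norm y)\<^sup>2 - r\<^sup>2)) powr s)"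
      by (simp add: Ker_def B_def)
    moreover have "0 \<le> Ker s r y * c\<^sup>2"
      using a_ns_pos[of "CARD('n)" s] s by (simp add: Ker_def)
    ultimately show ?thesis
      using True B by (simp add: indicator_def ennreal_mult[symmetric])
  next
    case False
    then show ?thesis by (auto simp: indicator_def)
  qed
  then show ?thesis
    unfolding B_def[symmetric] by (simp add: nn_integral_cmult)
qed

lemma nn_integral_Ker_le:
  fixes y :: "real^'n" and s R c :: real
  assumes s: "0 < s" "s < 1" and R: "0 < R"
  shows "ennreal (1 / R powr (1 + s)) *
      (\<integral>\<^sup>+ r. indicator {0<..<R} r * ennreal (r powr s) *
        (indicator {y. r < norm y} y * ennreal (Ker s r y * c\<^sup>2)) \<partial>lborel)
    \<le> ennreal (a_ns CARD('n) s / (1 - s) / R powr (2 * s)) *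
      ennreal (c\<^sup>2 / norm y powr (real CARD('n) - 2 * s))"
proof (cases "y = 0")
  case True
  have "(\<integral>\<^sup>+ r. indicator {0<..<R} r * ennreal (r powr s) *
        (indicator {y. r < norm y} y * ennreal (Ker s r y * c\<^sup>2)) \<partial>lborel) = (\<integral>\<^sup>+ (r::real). 0 \<partial>lborel)"
    by (intro nn_integral_cong) (auto simp: True indicator_def)
  then show ?thesis by simp
next
  case False
  define q where "q = norm y"
  define A where "A = a_ns CARD('n) s"
  have q: "0 < q" using False by (simp add: q_def)
  have A: "0 < A" unfolding A_def using s by (intro a_ns_pos) auto
  have "ennreal (1 / R powr (1 + s)) *
      (\<integral>\<^sup>+ r. indicator {0<..<R} r * ennreal (r powr s) *
        (indicator {y. r < norm y} y * ennreal (Ker s r y * c\<^sup>2)) \<partial>lborel)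
    \<le> ennreal (1 / R powr (1 + s)) * (ennreal (A * c\<^sup>2 / q ^ CARD('n)) *
      ennreal (q powr (2 * s) * (R powr (1 - s) / (1 - s))))"
    unfolding nn_integral_Ker_eq[OF s] A_def q_def
    using s R q by (intro mult_left_mono nn_integral_kernel_weight_le) (auto simp: q_def)
  also have "\<dots> = ennreal (1 / R powr (1 + s) * (A * c\<^sup>2 / q ^ CARD('n) * (q powr (2 * s) * (R powr (1 - s) / (1 - s)))))"
  proof -
    have "0 \<le> A * c\<^sup>2 / q ^ CARD('n)" "0 \<le> 1 / R powr (1 + s)"
      using A q by auto
    then show ?thesis
      by (simp only: ennreal_mult'[symmetric])
  qed
  also have "\<dots> = ennreal (A / (1 - s) / R powr (2 * s) * (c\<^sup>2 / q powr (real CARD('n) - 2 * s)))"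
  proof (rule arg_cong[where f = ennreal])
    have R_split: "R powr (1 + s) = R powr (1 - s) * R powr (2 * s)"
      by (simp add: powr_add[symmetric] add.commute)
    have q_split: "q ^ CARD('n) = q powr (real CARD('n) - 2 * s) * q powr (2 * s)"
      using q by (simp add: powr_add[symmetric] powr_realpow)
    have "0 < R powr (1 - s)" "0 < R powr (2 * s)" "0 < q powr (2 * s)"
        "0 < q powr (real CARD('n) - 2 * s)" "0 < 1 - s"
      using R q s by auto
    then show "1 / R powr (1 + s) * (A * c\<^sup>2 / q ^ CARD('n) * (q powr (2 * s) * (R powr (1 - s) / (1 - s))))
        = A / (1 - s) / R powr (2 * s) * (c\<^sup>2 / q powr (real CARD('n) - 2 * s))"
      unfolding R_split q_split by (simp add: field_simps)
  qed
  also have "\<dots> = ennreal (A / (1 - s) / R powr (2 * s)) * ennreal (c\<^sup>2 / q powr (real CARD('n) - 2 * s))"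
    using A s by (intro ennreal_mult') simp
  finally show ?thesis by (simp add: A_def q_def)
qed

lemma borel_measurable_frac_grad_norm:
  fixes u :: "real^'n \<Rightarrow> real"
  assumes [measurable]: "u \<in> borel_measurable borel"
  shows "frac_grad_norm s u \<in> borel_measurable borel"
proof -
  have [measurable]: "frac_partial s u i \<in> borel_measurable borel" for i
  proof -
    note borel_measurable_nth[measurable]
    have "(\<lambda>x. \<integral>y. (y $ i - x $ i) * (u y - u x) / norm (y - x) powr (real CARD('n) + s + 1) \<partial>lborel)
        \<in> borel_measurable (lborel :: (real^'n) measure)"
      by (rule lborel.borel_measurable_lebesgue_integral) (simp add: lborel_prod[symmetric])
    then show ?thesis unfolding frac_partial_def by simp
  qed
  have "frac_grad_norm s u = (\<lambda>x. sqrt (\<Sum>i\<in>UNIV. (frac_partial s u i x)\<^sup>2))"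
    by (auto simp: frac_grad_norm_def norm_vec_def L2_set_def fun_eq_iff)
  then show ?thesis by (simp only:) measurable
qed

lemma J_ACF_le:
  fixes u :: "real^'n \<Rightarrow> real"
  assumes s: "0 < s" "s < 1" and R: "0 < R" and u: "u \<in> borel_measurable borel"
  shows "J_ACF s u R \<le> ennreal (a_ns CARD('n) s / (1 - s) / R powr (2 * s)) *
      (\<integral>\<^sup>+ y. ennreal ((frac_grad_norm s u y)\<^sup>2 / norm y powr (real CARD('n) - 2 * s)) \<partial>lborel)"
proof -
  define G where "G = frac_grad_norm s u"
  define F where "F y r = indicator {0<..<R} r * ennreal (r powr s) *
      (indicator {y. r < norm y} y * ennreal (Ker s r y * (G y)\<^sup>2))" for y :: "real^'n" and r :: real
  have [measurable]: "G \<in> borel_measurable borel"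
    unfolding G_def using u by (rule borel_measurable_frac_grad_norm)
  have F_measurable: "case_prod F \<in> borel_measurable (lborel \<Otimes>\<^sub>M lborel)"
    unfolding F_def Ker_def by measurable
  have "J_ACF s u R = ennreal (1 / R powr (1 + s)) * (\<integral>\<^sup>+ r. (\<integral>\<^sup>+ y. F y r \<partial>lborel) \<partial>lborel)"
  proof -
    have "(\<lambda>y. indicator {y. r < norm y} y * ennreal (Ker s r y * (G y)\<^sup>2)) \<in> borel_measurable lborel" for r
      unfolding Ker_def by measurable
    then show ?thesis
      unfolding J_ACF_def F_def G_def by (simp add: nn_integral_cmult)
  qed
  also have "\<dots> = ennreal (1 / R powr (1 + s)) * (\<integral>\<^sup>+ y. (\<integral>\<^sup>+ r. F y r \<partial>lborel) \<partial>lborel)"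
    using lborel_pair.Fubini'[OF F_measurable] by simp
  also have "\<dots> = (\<integral>\<^sup>+ y. ennreal (1 / R powr (1 + s)) * (\<integral>\<^sup>+ r. F y r \<partial>lborel) \<partial>lborel)"
    using F_measurable by (intro nn_integral_cmult[symmetric] lborel.borel_measurable_nn_integral)
  also have "\<dots> \<le> (\<integral>\<^sup>+ y. ennreal (a_ns CARD('n) s / (1 - s) / R powr (2 * s)) *
      ennreal ((G y)\<^sup>2 / norm y powr (real CARD('n) - 2 * s)) \<partial>lborel)"
    unfolding F_def using s R by (intro nn_integral_mono nn_integral_Ker_le)
  also have "\<dots> = ennreal (a_ns CARD('n) s / (1 - s) / R powr (2 * s)) *
      (\<integral>\<^sup>+ y. ennreal ((G y)\<^sup>2 / norm y powr (real CARD('n) - 2 * s)) \<partial>lborel)"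
    by (rule nn_integral_cmult) measurable
  finally show ?thesis unfolding G_def .
qed

theorem proposition4p3:
  fixes s :: real
  assumes "0 < s" and "s < 1"
  shows "\<exists>C>0. \<forall>(u :: real^'n \<Rightarrow> real) (\<epsilon>::real) (R::real).
           \<epsilon> > 0 \<longrightarrow> holder_loc (s + \<epsilon>) u \<longrightarrow> L1_half s u \<longrightarrow> 0 < R \<longrightarrow> R < 1 \<longrightarrow>
           J_ACF s u R \<le> ennreal (C / R powr (2 * s)) *
             (\<integral>\<^sup>+ x. ennreal ((frac_grad_norm s u x)\<^sup>2 / norm x powr (real CARD('n) - 2 * s)) \<partial>lborel)"
proof (intro exI conjI allI impI)
  show "0 < a_ns CARD('n) s / (1 - s)"
    using assms by (simp add: a_ns_pos)
  fix u :: "real^'n \<Rightarrow> real" and \<epsilon> R :: real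
  assume "L1_half s u" "0 < R"
  then show "J_ACF s u R \<le> ennreal (a_ns CARD('n) s / (1 - s) / R powr (2 * s)) *
      (\<integral>\<^sup>+ x. ennreal ((frac_grad_norm s u x)\<^sup>2 / norm x powr (real CARD('n) - 2 * s)) \<partial>lborel)"
    using assms by (intro J_ACF_le) (auto simp: L1_half_def)
qed
end
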